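(* Let $\mathcal{A}=\{\mathbf{A},\mathbf{B},\mathbf{C},\mathbf{D}\}$, let $\mathcal{R}^\dagger$ be the symmetric relation on $\mathcal{A}$ whose related pairs are exactly $\{\mathbf{A},\mathbf{B}\}$, $\{\mathbf{B},\mathbf{D}\}$, $\{\mathbf{D},\mathbf{C}\}$, and let $\mathcal{H}$ be the base graph on $\{1,\dots,n\}$ defined as follows: if $n$ is even, $\mathcal{H}$ has edges $\{\sigma(i),\sigma(i+1)\}$, $i=1,\dots,n$ (indices modulo $n$), for some permutation $\sigma$ of $\{1,\dots,n\}$; if $n$ is odd, for a fixed vertex $u$ and a bijection $\sigma$ from $\{1,\dots,n-1\}$ onto $\{1,\dots,n\}\setminus\{u\}$, $\mathcal{H}$ has edges $\{\sigma(i),\sigma(i+1)\}$, $i=1,\dots,n-1$ (indices modulo $n-1$), and $u$ is isolated. Let $\mu_+=\frac{1+\sqrt5}{2}$ and $\mu_-=\frac{1-\sqrt5}{2}$. Then there exist at least $(\sqrt2)^{n-1}$ shapes $S$ (with respect to $\mathcal{H}$ and $\mathcal{R}^\dagger$) such that the number of sequences $v\in\mathcal{A}^n$ with $\mathcal{H}_{\mathcal{R}^\dagger}(v)=S$ is at least $2(\mu_+^n+\mu_-^n)$.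
   Context: For a sequence $v=(x_1,\dots,x_n)\in\mathcal{A}^n$, its shape $\mathcal{H}_{\mathcal{R}^\dagger}(v)$ is the graph with vertex set $\{1,\dots,n\}$ and edge set $\{\{i,k\}\in E_{\mathcal{H}}:(x_i,x_k)\in\mathcal{R}^\dagger\}$. A graph $S$ on $\{1,\dots,n\}$ is a shape if $S=\mathcal{H}_{\mathcal{R}^\dagger}(v)$ for some $v\in\mathcal{A}^n$; the sequences $v$ with $\mathcal{H}_{\mathcal{R}^\dagger}(v)=S$ are said to fold into $S$. *)

theory Defs
  imports Complex_Main "HOL-Library.FuncSet"
begin

datatype letter = LA | LB | LC | LD

fun Rdag :: "letter \<Rightarrow> letter \<Rightarrow> bool" where
  "Rdag LA LB = True"
| "Rdag LB LA = True"
| "Rdag LB LD = True"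
| "Rdag LD LB = True"
| "Rdag LD LC = True"
| "Rdag LC LD = True"
| "Rdag _ _ = False"

definition cycle_edges :: "nat \<Rightarrow> (nat \<Rightarrow> nat) \<Rightarrow> nat set set" where
  "cycle_edges m \<sigma> = {{\<sigma> i, \<sigma> (i mod m + 1)} | i. i \<in> {1..m}}"

definition seqs :: "nat \<Rightarrow> (nat \<Rightarrow> letter) set" where
  "seqs n = ({1..n} \<rightarrow>\<^sub>E (UNIV :: letter set))"

text \<open>The shape of v w.r.t. base graph (edge set) H: vertex set {1..n} is fixed,
  so a shape is represented by its edge set.\<close>
definition shape_of :: "nat set set \<Rightarrow> (nat \<Rightarrow> letter) \<Rightarrow> nat set set" where
  "shape_of H v = {e \<in> H. \<exists>i k. e = {i, k} \<and> Rdag (v i) (v k)}"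

definition shapes :: "nat \<Rightarrow> nat set set \<Rightarrow> nat set set set" where
  "shapes n H = {S. \<exists>v \<in> seqs n. shape_of H v = S}"

definition num_folding :: "nat \<Rightarrow> nat set set \<Rightarrow> nat set set \<Rightarrow> nat" where
  "num_folding n H S = card {v \<in> seqs n. shape_of H v = S}"

end

theory Submission
  imports Defs "HOL-Number_Theory.Fib"
begin

text \<open>Swapping A with C and B with D reverses the path A - B - D - C, so it preserves
  R-dagger, whereas applying it to exactly one letter of a related pair destroys the relation.
  On an even cycle of length m, put A or D on one colour class and C or B on the other, choosing
  per vertex by a bit: every edge is related unless its two bits select A and C. The admissible
  bit strings are the independent sets of the cycle, counted by the Lucas number
  L(m) = mu+^m + mu-^m, so together with the choice of colour class at least 2 L(m) sequences
  fold into the full cycle. Reflecting such a sequence at the vertices of a set X makes it fold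
  into the cycle minus the edges cut by X; letting X range over the sets of even-indexed
  vertices gives 2^(m/2) distinct shapes. For odd n the isolated vertex contributes a factor 4,
  which dominates L(n) / L(n - 1).\<close>

fun no_adjacent_True :: "bool list \<Rightarrow> bool" where
  "no_adjacent_True (x # y # zs) = (\<not> (x \<and> y) \<and> no_adjacent_True (y # zs))"
| "no_adjacent_True _ = True"

definition path_indep_sets :: "nat \<Rightarrow> bool list set" where
  "path_indep_sets j = {xs. length xs = j \<and> no_adjacent_True xs}"

definition cycle_indep_sets :: "nat \<Rightarrow> bool list set" where
  "cycle_indep_sets m = {xs \<in> path_indep_sets m. \<not> (hd xs \<and> last xs)}"

lemma no_adjacent_True_False_Cons [simp]: "no_adjacent_True (False # ys) = no_adjacent_True ys"
  by (cases ys) auto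

lemma no_adjacent_True_snoc_False: "no_adjacent_True (xs @ [False]) = no_adjacent_True xs"
  by (induction xs rule: no_adjacent_True.induct) auto

lemma no_adjacent_True_nth:
  "no_adjacent_True xs \<Longrightarrow> Suc j < length xs \<Longrightarrow> \<not> (xs ! j \<and> xs ! Suc j)"
  by (induction xs arbitrary: j rule: no_adjacent_True.induct)
    (auto simp: nth_Cons split: nat.splits)

lemma finite_path_indep_sets: "finite (path_indep_sets j)"
  using finite_lists_length_eq[of "UNIV :: bool set" j]
  by (auto simp: path_indep_sets_def intro: finite_subset)

lemma finite_cycle_indep_sets: "finite (cycle_indep_sets m)"
  using finite_path_indep_sets by (simp add: cycle_indep_sets_def)

lemma path_indep_sets_Suc_Suc:
  "path_indep_sets (Suc (Suc j)) =
     Cons False ` path_indep_sets (Suc j) \<union> (\<lambda>ys. True # False # ys) ` path_indep_sets j"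
  (is "?L = ?R")
proof
  show "?L \<subseteq> ?R"
  proof
    fix xs assume "xs \<in> ?L"
    then obtain x y zs where "xs = x # y # zs" "length zs = j" "no_adjacent_True (x # y # zs)"
      by (auto simp: path_indep_sets_def length_Suc_conv)
    then show "xs \<in> ?R"
      by (cases x) (auto simp: path_indep_sets_def)
  qed
qed (auto simp: path_indep_sets_def)

lemma card_path_indep_sets: "card (path_indep_sets j) = fib (Suc (Suc j))"
proof (induction j rule: fib.induct)
  case 1
  have "path_indep_sets 0 = {[]}" by (auto simp: path_indep_sets_def)
  then show ?case by simp
next
  case 2
  have "path_indep_sets (Suc 0) = {[False], [True]}"
    by (auto simp: path_indep_sets_def length_Suc_conv)
  then show ?case by (simp add: numeral_eq_Suc)
next
  case (3 j)
  have "card (path_indep_sets (Suc (Suc j)))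
      = card (Cons False ` path_indep_sets (Suc j))
        + card ((\<lambda>ys. True # False # ys) ` path_indep_sets j)"
    unfolding path_indep_sets_Suc_Suc
    by (rule card_Un_disjoint) (auto simp: finite_path_indep_sets)
  also have "\<dots> = card (path_indep_sets (Suc j)) + card (path_indep_sets j)"
    by (simp add: card_image inj_on_def)
  finally show ?case using 3 by simp
qed

fun lucas :: "nat \<Rightarrow> nat" where
  "lucas 0 = 2"
| "lucas (Suc 0) = 1"
| "lucas (Suc (Suc n)) = lucas (Suc n) + lucas n"

lemma lucas_Suc_eq_fib: "lucas (Suc n) = fib n + fib (Suc (Suc n))"
  by (induction n rule: fib.induct) simp_all

lemma lucas_pos: "lucas n > 0"
  by (induction n rule: lucas.induct) simp_all

lemma lucas_Suc_le: "lucas (Suc n) \<le> 4 * lucas n"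
  by (induction n rule: lucas.induct) simp_all

lemma power_Suc_Suc_golden:
  fixes x :: real
  assumes "x\<^sup>2 = x + 1"
  shows "x ^ Suc (Suc n) = x ^ Suc n + x ^ n"
proof -
  have "x ^ Suc (Suc n) = x\<^sup>2 * x ^ n" by (simp add: power2_eq_square)
  with assms show ?thesis by (simp add: algebra_simps)
qed

lemma lucas_closed_form:
  "real (lucas n) = ((1 + sqrt 5) / 2) ^ n + ((1 - sqrt 5) / 2) ^ n"
proof (induction n rule: lucas.induct)
  case (3 n)
  have "((1 + sqrt 5) / 2)\<^sup>2 = (1 + sqrt 5) / 2 + 1"
    and "((1 - sqrt 5) / 2)\<^sup>2 = (1 - sqrt 5) / 2 + (1::real)"
    by (simp_all add: power2_eq_square field_simps)
  then show ?case
    by (simp only: lucas.simps of_nat_add 3 power_Suc_Suc_golden)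
qed (simp_all add: field_simps)

lemma lucas_le_card_cycle_indep_sets:
  assumes "m \<ge> 2"
  shows "lucas m \<le> card (cycle_indep_sets m)"
proof (cases "m = 2")
  case True
  have "{[False, False], [False, True], [True, False]} \<subseteq> cycle_indep_sets m"
    using True by (auto simp: cycle_indep_sets_def path_indep_sets_def)
  from card_mono[OF finite_cycle_indep_sets this] show ?thesis
    using True by (simp add: numeral_eq_Suc)
next
  case False
  with assms obtain j where j: "m = Suc (Suc (Suc j))"
    by (metis add_2_eq_Suc le_Suc_ex le_antisym not_less_eq_eq)
  let ?A = "Cons False ` path_indep_sets (Suc (Suc j))"
  let ?B = "(\<lambda>ws. True # False # ws @ [False]) ` path_indep_sets j"
  have "lucas m = card (path_indep_sets (Suc (Suc j))) + card (path_indep_sets j)"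
    by (simp add: j lucas_Suc_eq_fib card_path_indep_sets)
  also have "\<dots> = card (?A \<union> ?B)"
    by (subst card_Un_disjoint) (auto simp: finite_path_indep_sets card_image inj_on_def)
  also have "\<dots> \<le> card (cycle_indep_sets m)"
    by (rule card_mono[OF finite_cycle_indep_sets])
      (auto simp: j cycle_indep_sets_def path_indep_sets_def no_adjacent_True_snoc_False)
  finally show ?thesis .
qed

fun reflect :: "letter \<Rightarrow> letter" where
  "reflect LA = LC"
| "reflect LC = LA"
| "reflect LB = LD"
| "reflect LD = LB"

definition reflect_if :: "bool \<Rightarrow> letter \<Rightarrow> letter" where
  "reflect_if x a = (if x then reflect a else a)"

lemma Rdag_sym: "Rdag a b = Rdag b a"
  by (cases a; cases b) auto

lemma Rdag_reflect_if_iff: "Rdag a c \<Longrightarrow> Rdag (reflect_if x a) (reflect_if y c) \<longleftrightarrow> x = y"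
  by (cases a; cases c; cases x; cases y) (auto simp: reflect_if_def)

lemma reflect_if_inj: "reflect_if x a = reflect_if x b \<Longrightarrow> a = b"
  by (cases a; cases b; cases x) (auto simp: reflect_if_def)

text \<open>Positions of parity \<open>p\<close> carry A or D, the others C or B, and the bit \<open>s\<close> selects
  A resp. C; across the two classes, A and C form the only unrelated pair.\<close>
definition zigzag :: "bool \<Rightarrow> bool \<Rightarrow> nat \<Rightarrow> letter" where
  "zigzag p s i = (if odd i = p then (if s then LA else LD) else (if s then LC else LB))"

lemma Rdag_zigzag: "odd i \<noteq> odd i' \<Longrightarrow> \<not> (s \<and> s') \<Longrightarrow> Rdag (zigzag p s i) (zigzag p s' i')"
  by (cases p; cases s; cases s'; cases "odd i") (auto simp: zigzag_def)

lemma zigzag_inj: "zigzag p s i = zigzag p' s' i \<Longrightarrow> p = p' \<and> s = s'"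
  by (cases p; cases p'; cases s; cases s'; cases "odd i") (auto simp: zigzag_def)

text \<open>Positions \<open>i\<close> run over \<open>{1..m}\<close>, while the bit list \<open>b\<close> is indexed from 0.\<close>
definition cycle_word :: "(nat \<Rightarrow> bool) \<Rightarrow> bool \<Rightarrow> bool list \<Rightarrow> nat \<Rightarrow> letter" where
  "cycle_word f p b i = reflect_if (f i) (zigzag p (b ! (i - 1)) i)"

lemma Rdag_cycle_word_iff:
  assumes "even m" and b: "b \<in> cycle_indep_sets m" and i: "i \<in> {1..m}"
  shows "Rdag (cycle_word f p b i) (cycle_word f p b (i mod m + 1)) \<longleftrightarrow> (f i \<longleftrightarrow> f (i mod m + 1))"
proof -
  have len: "length b = m" and indep: "no_adjacent_True b" and ends: "\<not> (hd b \<and> last b)"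
    using b by (auto simp: cycle_indep_sets_def path_indep_sets_def)
  have "odd i \<noteq> odd (i mod m + 1) \<and> \<not> (b ! (i - 1) \<and> b ! (i mod m + 1 - 1))"
  proof (cases "i < m")
    case True
    then show ?thesis using i len no_adjacent_True_nth[OF indep, of "i - 1"] by auto
  next
    case False
    then have "i = m" "b \<noteq> []" using i len by auto
    then show ?thesis
      using \<open>even m\<close> ends len by (auto simp: last_conv_nth hd_conv_nth)
  qed
  then have "Rdag (zigzag p (b ! (i - 1)) i) (zigzag p (b ! (i mod m + 1 - 1)) (i mod m + 1))"
    using Rdag_zigzag by blast
  then show ?thesis
    unfolding cycle_word_def by (rule Rdag_reflect_if_iff)
qed

lemma cycle_word_inj:
  assumes "length b = m" "length b' = m" "m > 0"
    and eq: "\<And>i. i \<in> {1..m} \<Longrightarrow> cycle_word f p b i = cycle_word f p' b' i"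
  shows "p = p' \<and> b = b'"
proof -
  have *: "p = p' \<and> b ! (i - 1) = b' ! (i - 1)" if "i \<in> {1..m}" for i
    using eq[OF that] unfolding cycle_word_def by (blast dest: reflect_if_inj zigzag_inj)
  then have "b ! j = b' ! j" if "j < m" for j
    using that *[of "Suc j"] by simp
  then show ?thesis
    using *[of 1] assms by (simp add: nth_equalityI)
qed

definition uncut_edges :: "nat set set \<Rightarrow> nat set \<Rightarrow> nat set set" where
  "uncut_edges H X = {e \<in> H. \<exists>a b. e = {a, b} \<and> (a \<in> X \<longleftrightarrow> b \<in> X)}"

lemma shape_of_cycle_edges_eq_uncut_edges:
  assumes "\<And>i. i \<in> {1..m} \<Longrightarrow>
      Rdag (v (\<sigma> i)) (v (\<sigma> (i mod m + 1))) \<longleftrightarrow> (\<sigma> i \<in> X \<longleftrightarrow> \<sigma> (i mod m + 1) \<in> X)"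
  shows "shape_of (cycle_edges m \<sigma>) v = uncut_edges (cycle_edges m \<sigma>) X"
proof -
  have "Rdag (v a) (v c) \<longleftrightarrow> (a \<in> X \<longleftrightarrow> c \<in> X)" if ac: "{a, c} \<in> cycle_edges m \<sigma>" for a c
  proof -
    obtain i where "i \<in> {1..m}" and "{a, c} = {\<sigma> i, \<sigma> (i mod m + 1)}"
      using ac unfolding cycle_edges_def by blast
    then show ?thesis
      using assms Rdag_sym by (auto simp: doubleton_eq_iff)
  qed
  then show ?thesis
    unfolding shape_of_def uncut_edges_def by blast
qed

lemma UNIV_letter: "(UNIV :: letter set) = {LA, LB, LC, LD}"
  by (auto intro: letter.exhaust)

lemma card_letter: "card (UNIV :: letter set) = 4"
  by (simp add: UNIV_letter)

lemma finite_seqs: "finite (seqs n)"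
  unfolding seqs_def by (rule finite_PiE) (simp_all add: UNIV_letter)

lemma finite_shapes: "finite (shapes n H)"
proof -
  have "shapes n H = shape_of H ` seqs n" by (auto simp: shapes_def)
  then show ?thesis by (simp add: finite_seqs)
qed

lemma card_cycle_indep_sets_le_num_folding:
  assumes "even m" "0 < m" "U \<subseteq> {1..n}" and bij: "bij_betw \<sigma> {1..m} ({1..n} - U)"
  shows "2 * card (cycle_indep_sets m) * 4 ^ card U
           \<le> num_folding n (cycle_edges m \<sigma>) (uncut_edges (cycle_edges m \<sigma>) X)"
proof -
  let ?H = "cycle_edges m \<sigma>"
  let ?f = "\<lambda>i. \<sigma> i \<in> X"
  have inj: "inj_on \<sigma> {1..m}" and img: "\<sigma> ` {1..m} = {1..n} - U"
    using bij by (auto simp: bij_betw_def)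
  define D where "D = (UNIV :: bool set) \<times> cycle_indep_sets m \<times> (U \<rightarrow>\<^sub>E (UNIV :: letter set))"
  define seq where "seq = (\<lambda>(p, b, c) x.
    if x \<in> \<sigma> ` {1..m} then cycle_word ?f p b (the_inv_into {1..m} \<sigma> x) else c x)"
  have seq_cycle: "seq (p, b, c) (\<sigma> i) = cycle_word ?f p b i" if "i \<in> {1..m}" for p b c i
    using that inj by (simp add: seq_def the_inv_into_f_f)
  have seq_rest: "seq (p, b, c) x = c x" if "x \<notin> {1..n} - U" for p b c x
  proof -
    have "x \<notin> \<sigma> ` {1..m}" using that img by simp
    then show ?thesis by (simp add: seq_def)
  qed
  have folds: "seq t \<in> {v \<in> seqs n. shape_of ?H v = uncut_edges ?H X}" if t_in: "t \<in> D" for t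
  proof -
    obtain p b c where t: "t = (p, b, c)" and b: "b \<in> cycle_indep_sets m"
      and c: "c \<in> U \<rightarrow>\<^sub>E UNIV"
      using t_in by (auto simp: D_def)
    have "seq t \<in> seqs n"
      unfolding seqs_def t
    proof (rule PiE_I)
      fix x assume "x \<notin> {1..n}"
      then have "x \<notin> U" and rest: "x \<notin> {1..n} - U" using \<open>U \<subseteq> {1..n}\<close> by auto
      then show "seq (p, b, c) x = undefined"
        using seq_rest[OF rest] PiE_arb[OF c] by simp
    qed simp
    moreover have "shape_of ?H (seq t) = uncut_edges ?H X"
    proof (rule shape_of_cycle_edges_eq_uncut_edges)
      fix i assume i: "i \<in> {1..m}"
      with \<open>0 < m\<close> have i': "i mod m + 1 \<in> {1..m}" by (simp add: Suc_le_eq)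
      show "Rdag (seq t (\<sigma> i)) (seq t (\<sigma> (i mod m + 1)))
          \<longleftrightarrow> (\<sigma> i \<in> X \<longleftrightarrow> \<sigma> (i mod m + 1) \<in> X)"
        unfolding t seq_cycle[OF i] seq_cycle[OF i']
        by (rule Rdag_cycle_word_iff[OF \<open>even m\<close> b i])
    qed
    ultimately show ?thesis by simp
  qed
  have "inj_on seq D"
  proof (rule inj_onI)
    fix t t' assume "t \<in> D" "t' \<in> D" and eq: "seq t = seq t'"
    then obtain p b c p' b' c' where t: "t = (p, b, c)" "t' = (p', b', c')"
      and b: "length b = m" "length b' = m" and c: "c \<in> U \<rightarrow>\<^sub>E UNIV" "c' \<in> U \<rightarrow>\<^sub>E UNIV"
      by (auto simp: D_def cycle_indep_sets_def path_indep_sets_def)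
    have "p = p' \<and> b = b'"
    proof (rule cycle_word_inj[OF b \<open>0 < m\<close>])
      fix i assume "i \<in> {1..m}"
      from seq_cycle[OF this, of p b c] seq_cycle[OF this, of p' b' c'] eq t
      show "cycle_word ?f p b i = cycle_word ?f p' b' i" by simp
    qed
    moreover have "c = c'"
    proof (rule PiE_ext[OF c])
      fix x assume "x \<in> U"
      then have "x \<notin> {1..n} - U" by simp
      from seq_rest[OF this, of p b c] seq_rest[OF this, of p' b' c'] eq t
      show "c x = c' x" by simp
    qed
    ultimately show "t = t'" using t by simp
  qed
  then have "card D = card (seq ` D)"
    by (simp add: card_image)
  also have "\<dots> \<le> num_folding n ?H (uncut_edges ?H X)"
    unfolding num_folding_def using folds
    by (intro card_mono) (auto simp: finite_seqs)
  finally show ?thesis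
    using finite_subset[OF \<open>U \<subseteq> {1..n}\<close>]
    by (simp add: D_def card_cartesian_product card_PiE card_letter)
qed

lemma odd_edge_in_uncut_edges_iff:
  assumes inj: "inj_on \<sigma> {1..m}" and j: "j \<in> {1..m div 2}" and J: "J \<subseteq> {1..m div 2}"
  shows "{\<sigma> (2 * j - 1), \<sigma> (2 * j)} \<in> uncut_edges (cycle_edges m \<sigma>) (\<sigma> ` (*) 2 ` J)
           \<longleftrightarrow> j \<notin> J"
proof -
  let ?X = "\<sigma> ` (*) 2 ` J"
  have pos: "2 * j - 1 \<in> {1..m}" "2 * j \<in> {1..m}" and next_pos: "(2 * j - 1) mod m + 1 = 2 * j"
    using j by auto
  have even_pos: "2 * j' \<in> {1..m}" if "j' \<in> J" for j'
    using subsetD[OF J that] by auto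
  have "{\<sigma> (2 * j - 1), \<sigma> (2 * j)} \<in> cycle_edges m \<sigma>"
    unfolding cycle_edges_def using pos(1) next_pos by (metis (mono_tags, lifting) mem_Collect_eq)
  moreover have "\<sigma> (2 * j - 1) \<notin> ?X"
  proof
    assume "\<sigma> (2 * j - 1) \<in> ?X"
    then obtain j' where "j' \<in> J" "\<sigma> (2 * j - 1) = \<sigma> (2 * j')" by auto
    then have "2 * j - 1 = 2 * j'" using inj_onD[OF inj _ pos(1) even_pos] by blast
    moreover have "1 \<le> j" using j by simp
    ultimately show False by presburger
  qed
  moreover have "\<sigma> (2 * j) \<in> ?X \<longleftrightarrow> j \<in> J"
    using inj_onD[OF inj _ pos(2) even_pos] by fastforce
  moreover have "(\<exists>a b. {\<sigma> (2 * j - 1), \<sigma> (2 * j)} = {a, b} \<and> (a \<in> ?X \<longleftrightarrow> b \<in> ?X))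
      \<longleftrightarrow> (\<sigma> (2 * j - 1) \<in> ?X \<longleftrightarrow> \<sigma> (2 * j) \<in> ?X)"
    by (auto simp: doubleton_eq_iff)
  ultimately show ?thesis
    unfolding uncut_edges_def by simp
qed

lemma inj_on_uncut_edges_even_positions:
  assumes "inj_on \<sigma> {1..m}"
  shows "inj_on (\<lambda>J. uncut_edges (cycle_edges m \<sigma>) (\<sigma> ` (*) 2 ` J)) (Pow {1..m div 2})"
proof -
  let ?edge = "\<lambda>j. {\<sigma> (2 * j - 1), \<sigma> (2 * j)}"
  let ?S = "\<lambda>J. uncut_edges (cycle_edges m \<sigma>) (\<sigma> ` (*) 2 ` J)"
  have recover: "J = {j \<in> {1..m div 2}. ?edge j \<notin> ?S J}" if "J \<subseteq> {1..m div 2}" for J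
  proof (rule set_eqI)
    fix j
    show "j \<in> J \<longleftrightarrow> j \<in> {j \<in> {1..m div 2}. ?edge j \<notin> ?S J}"
      using odd_edge_in_uncut_edges_iff[OF assms _ that, of j] that by auto
  qed
  show ?thesis
  proof (rule inj_onI)
    fix J J' assume "J \<in> Pow {1..m div 2}" "J' \<in> Pow {1..m div 2}" "?S J = ?S J'"
    then show "J = J'" using recover[of J] recover[of J'] by simp
  qed
qed

lemma mem_shapes_if_num_folding_pos: "num_folding n H S > 0 \<Longrightarrow> S \<in> shapes n H"
  unfolding num_folding_def shapes_def by (auto dest: card_gt_0_iff[THEN iffD1])

lemma num_folding_no_edges: "num_folding n {} {} = 4 ^ n"
  by (simp add: num_folding_def shape_of_def seqs_def card_PiE card_letter)

lemma card_shapes_with_many_foldings: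
  fixes T :: real
  assumes "even m" "m \<ge> 2" "U \<subseteq> {1..n}" and bij: "bij_betw \<sigma> {1..m} ({1..n} - U)"
    and T: "T \<le> real (2 * lucas m * 4 ^ card U)"
  shows "2 ^ (m div 2) \<le> card {S \<in> shapes n (cycle_edges m \<sigma>).
            T \<le> real (num_folding n (cycle_edges m \<sigma>) S)}"
proof -
  let ?H = "cycle_edges m \<sigma>"
  let ?S = "\<lambda>J. uncut_edges ?H (\<sigma> ` (*) 2 ` J)"
  let ?G = "{S \<in> shapes n ?H. T \<le> real (num_folding n ?H S)}"
  have "?S J \<in> ?G" for J
  proof -
    have "2 * lucas m * 4 ^ card U \<le> 2 * card (cycle_indep_sets m) * 4 ^ card U"
      using lucas_le_card_cycle_indep_sets[OF \<open>m \<ge> 2\<close>] by simp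
    also have "\<dots> \<le> num_folding n ?H (?S J)"
      using card_cycle_indep_sets_le_num_folding assms by simp
    finally have many: "2 * lucas m * 4 ^ card U \<le> num_folding n ?H (?S J)" .
    then have "num_folding n ?H (?S J) > 0"
      using lucas_pos[of m] by (meson le_trans nat_0_less_mult_iff not_le zero_less_numeral zero_less_power)
    moreover have "T \<le> real (num_folding n ?H (?S J))"
      using T many by (meson of_nat_le_iff order_trans)
    ultimately show ?thesis
      by (simp add: mem_shapes_if_num_folding_pos)
  qed
  moreover have "inj_on ?S (Pow {1..m div 2})"
    using bij by (intro inj_on_uncut_edges_even_positions) (simp add: bij_betw_def)
  ultimately have "card (Pow {1..m div 2}) \<le> card ?G"
    by (intro card_inj_on_le[where f = ?S]) (auto simp: finite_shapes)
  then show ?thesis by (simp add: card_Pow)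
qed

lemma sqrt2_power_le_two_power_half:
  assumes "even m" "k \<le> m"
  shows "sqrt 2 ^ k \<le> (2 :: real) ^ (m div 2)"
proof -
  have "sqrt 2 ^ k \<le> sqrt 2 ^ m"
    using assms(2) by (rule power_increasing) simp
  also have "\<dots> = 2 ^ (m div 2)"
    using assms(1) by (metis dvd_mult_div_cancel power_mult real_sqrt_pow2 zero_le_numeral)
  finally show ?thesis .
qed

theorem lemma2:
  fixes n u :: nat and \<sigma> :: "nat \<Rightarrow> nat" and H :: "nat set set"
  assumes "n \<ge> 1"
  assumes "(even n \<and> bij_betw \<sigma> {1..n} {1..n} \<and> H = cycle_edges n \<sigma>)
         \<or> (odd n \<and> u \<in> {1..n} \<and> bij_betw \<sigma> {1..n-1} ({1..n} - {u})
             \<and> H = cycle_edges (n - 1) \<sigma>)"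
  shows "real (card {S \<in> shapes n H.
             real (num_folding n H S) \<ge> 2 * (((1 + sqrt 5) / 2) ^ n + ((1 - sqrt 5) / 2) ^ n)})
         \<ge> sqrt 2 ^ (n - 1)"
proof -
  define T where "T = 2 * (((1 + sqrt 5) / 2) ^ n + ((1 - sqrt 5) / 2) ^ n)"
  have T: "T = real (2 * lucas n)" by (simp add: T_def lucas_closed_form)
  let ?G = "{S \<in> shapes n H. T \<le> real (num_folding n H S)}"
  have "sqrt 2 ^ (n - 1) \<le> real (card ?G)"
  proof (cases "even n")
    case True
    then have "2 \<le> n" using \<open>n \<ge> 1\<close> by presburger
    with True assms(2) have "2 ^ (n div 2) \<le> card ?G"
      using card_shapes_with_many_foldings[of n "{}" n \<sigma> T] T by simp
    then show ?thesis
      using sqrt2_power_le_two_power_half[OF True, of "n - 1"] by (simp add: order_trans)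
  next
    case odd: False
    show ?thesis
    proof (cases "n = 1")
      case True
      with assms(2) have "H = {}" by (simp add: cycle_edges_def)
      with True T have "{} \<in> ?G"
        using num_folding_no_edges[of 1] by (simp add: mem_shapes_if_num_folding_pos)
      then have "0 < card ?G" by (auto simp: card_gt_0_iff finite_shapes)
      with True show ?thesis by simp
    next
      case False
      then have "even (n - 1)" "2 \<le> n - 1" using odd \<open>n \<ge> 1\<close> by presburger+
      moreover have "lucas n \<le> 4 * lucas (n - 1)"
        using lucas_Suc_le[of "n - 1"] \<open>n \<ge> 1\<close> by simp
      ultimately have "2 ^ ((n - 1) div 2) \<le> card ?G"
        using card_shapes_with_many_foldings[of "n - 1" "{u}" n \<sigma> T] odd assms(2) T by simp
      then show ?thesis
        using sqrt2_power_le_two_power_half[OF \<open>even (n - 1)\<close> order_refl] by (simp add: order_trans)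
    qed
  qed
  then show ?thesis by (simp add: T_def)
qed

end
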